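(* In the setting of the lattice $\mathbb Z^d$ with $\Gamma=p_1\mathbb Z\oplus\dots\oplus p_d\mathbb Z$ ($p_j\ge2$), let $Q:\mathcal V_*\to\mathbb R$ be real, $p=p_1\cdots p_d$, and $\widehat Q(l)=\frac1p\sum_{\mathrm n\in\mathcal V_*}e^{-2\pi i(\frac{l_1n_1}{p_1}+\dots+\frac{l_dn_d}{p_d})}Q(\mathrm n)$ for $l\in\mathcal V_*$. Then $$\mathcal I_1(Q)=p\,\widehat Q(0),\qquad \mathcal I_2(Q)=\frac p2\sum_{\mathrm n\in\mathcal V_*}|\widehat Q(\mathrm n)|^2,$$ and for $j=1,\dots,d$, $$\mathcal I^{\mathfrak e_j}_{p_j+2}(Q)=\mathcal I_2(Q)+\frac{p\,p_j}{2}\sum_{\mathrm n\in\mathcal V_*,\ n_j=0}|\widehat Q(\mathrm n)|^2.$$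
   Context: $\mathcal V_*=\{\mathrm n=(n_1,\dots,n_d)\in\mathbb Z^d:0\le n_j<p_j\}$ is the vertex set of the fundamental graph of $\mathbb Z^d$ (vertices $\mathbb Z^d$, edges $\mathrm n\sim\mathrm n\pm\mathfrak e_j$) modulo $\Gamma$. The fundamental graph has, for each $\mathrm n\in\mathcal V_*$ and $j$, an oriented edge from $\mathrm n$ to the vertex with $n_j$ replaced by $n_j+1\bmod p_j$, of index $\mathfrak e_j$ if $n_j=p_j-1$ and $0$ otherwise, plus reversed edges with negated index. Cycles: closed paths of oriented edges up to cyclic permutation; prime if not an $r$-fold repetition with $r\ge2$; length $|\mathbf c|$; index $\tau(\mathbf c)$ = sum of edge indices. Modified graph $\widetilde{\mathcal G}_*$: add a loop $\mathbf e_v$ of index $0$ at each vertex; weight $\omega(\mathbf c,Q)$ = product of edge weights ($1$ on original edges, $Q(v)$ on $\mathbf e_v$). $\mathcal P,\widetilde{\mathcal P}$: prime cycles of $\mathcal G_*,\widetilde{\mathcal G}_*$. $\mathcal I_n^{\mathrm m}(Q)=\sum\frac1r\omega^r(\mathbf c,Q)$ over $r\in\{1,\dots,n\}$, $\mathbf c\in\widetilde{\mathcal P}\setminus\mathcal P$ with $r|\mathbf c|=n$, $r\tau(\mathbf c)=\mathrm m$; $\mathcal I_n(Q)$ the same sum without the index condition. $\mathfrak e_j$ is the $j$-th standard basis vector. *)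

theory Defs
  imports Complex_Main
begin

(* Coordinates are indexed 0..d-1.  A vertex of the fundamental graph is
   n :: nat => nat with n j < p j for j < d and n j = 0 for j >= d.
   Indices (elements of Z^d) are represented as nat => int. *)

definition verts :: "nat \<Rightarrow> (nat \<Rightarrow> nat) \<Rightarrow> (nat \<Rightarrow> nat) set" where
  "verts d p = {n. (\<forall>j<d. n j < p j) \<and> (\<forall>j\<ge>d. n j = 0)}"

(* Oriented edges: Step v j True is the edge from v to v with n_j replaced by
   n_j+1 mod p_j; Step v j False is the reversed edge of the forward edge
   ending at v (going from v to v with n_j replaced by n_j-1 mod p_j);
   Loop v is the added loop e_v of the modified graph. *)
datatype edge = Step "nat \<Rightarrow> nat" nat bool | Loop "nat \<Rightarrow> nat"

definition orig_edges :: "nat \<Rightarrow> (nat \<Rightarrow> nat) \<Rightarrow> edge set" where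
  "orig_edges d p = {Step v j b | v j b. v \<in> verts d p \<and> j < d}"

definition mod_edges :: "nat \<Rightarrow> (nat \<Rightarrow> nat) \<Rightarrow> edge set" where
  "mod_edges d p = orig_edges d p \<union> {Loop v | v. v \<in> verts d p}"

fun esrc :: "edge \<Rightarrow> (nat \<Rightarrow> nat)" where
  "esrc (Step v j b) = v"
| "esrc (Loop v) = v"

fun etgt :: "(nat \<Rightarrow> nat) \<Rightarrow> edge \<Rightarrow> (nat \<Rightarrow> nat)" where
  "etgt p (Step v j b) =
     (if b then v(j := (v j + 1) mod p j) else v(j := (v j + p j - 1) mod p j))"
| "etgt p (Loop v) = v"

definition unitv :: "nat \<Rightarrow> nat \<Rightarrow> int" where
  "unitv j = (\<lambda>i. if i = j then 1 else 0)"

fun eidx :: "(nat \<Rightarrow> nat) \<Rightarrow> edge \<Rightarrow> nat \<Rightarrow> int" where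
  "eidx p (Step v j b) =
     (if b then (if v j = p j - 1 then unitv j else (\<lambda>_. 0))
           else (if v j = 0 then (\<lambda>i. - unitv j i) else (\<lambda>_. 0)))"
| "eidx p (Loop v) = (\<lambda>_. 0)"

fun eweight :: "((nat \<Rightarrow> nat) \<Rightarrow> real) \<Rightarrow> edge \<Rightarrow> real" where
  "eweight Q (Step v j b) = 1"
| "eweight Q (Loop v) = Q v"

definition closed_path :: "edge set \<Rightarrow> (nat \<Rightarrow> nat) \<Rightarrow> edge list \<Rightarrow> bool" where
  "closed_path E p c \<longleftrightarrow> c \<noteq> [] \<and> set c \<subseteq> E \<and>
     (\<forall>i<length c. etgt p (c ! i) = esrc (c ! ((i + 1) mod length c)))"

(* a cycle is a closed path up to cyclic permutation *)
definition cyc_class :: "edge list \<Rightarrow> edge list set" where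
  "cyc_class c = range (\<lambda>k. rotate k c)"

definition repetition_free :: "edge list \<Rightarrow> bool" where
  "repetition_free c \<longleftrightarrow> \<not> (\<exists>r u. r \<ge> 2 \<and> c = concat (replicate r u))"

definition prime_cycles :: "edge set \<Rightarrow> (nat \<Rightarrow> nat) \<Rightarrow> edge list set set" where
  "prime_cycles E p = cyc_class ` {c. closed_path E p c \<and> repetition_free c}"

definition cyc_rep :: "edge list set \<Rightarrow> edge list" where
  "cyc_rep C = (SOME c. c \<in> C)"

definition cyc_len :: "edge list set \<Rightarrow> nat" where
  "cyc_len C = length (cyc_rep C)"

definition cyc_index :: "(nat \<Rightarrow> nat) \<Rightarrow> edge list set \<Rightarrow> nat \<Rightarrow> int" where
  "cyc_index p C = (\<lambda>i. \<Sum>e\<leftarrow>cyc_rep C. eidx p e i)"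

definition cyc_weight :: "((nat \<Rightarrow> nat) \<Rightarrow> real) \<Rightarrow> edge list set \<Rightarrow> real" where
  "cyc_weight Q C = (\<Prod>e\<leftarrow>cyc_rep C. eweight Q e)"

definition I_terms :: "nat \<Rightarrow> (nat \<Rightarrow> nat) \<Rightarrow> nat \<Rightarrow> (nat \<times> edge list set) set" where
  "I_terms d p n = {(r, C). r \<in> {1..n} \<and>
      C \<in> prime_cycles (mod_edges d p) p - prime_cycles (orig_edges d p) p \<and>
      r * cyc_len C = n}"

definition I_idx :: "nat \<Rightarrow> (nat \<Rightarrow> nat) \<Rightarrow> nat \<Rightarrow> (nat \<Rightarrow> int) \<Rightarrow> ((nat \<Rightarrow> nat) \<Rightarrow> real) \<Rightarrow> real" where
  "I_idx d p n m Q = (\<Sum>x\<in>{x \<in> I_terms d p n. (\<lambda>i. int (fst x) * cyc_index p (snd x) i) = m}.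
       (1 / real (fst x)) * cyc_weight Q (snd x) ^ fst x)"

definition I_all :: "nat \<Rightarrow> (nat \<Rightarrow> nat) \<Rightarrow> nat \<Rightarrow> ((nat \<Rightarrow> nat) \<Rightarrow> real) \<Rightarrow> real" where
  "I_all d p n Q = (\<Sum>x\<in>I_terms d p n. (1 / real (fst x)) * cyc_weight Q (snd x) ^ fst x)"

definition period_prod :: "nat \<Rightarrow> (nat \<Rightarrow> nat) \<Rightarrow> nat" where
  "period_prod d p = (\<Prod>j<d. p j)"

definition Qhat :: "nat \<Rightarrow> (nat \<Rightarrow> nat) \<Rightarrow> ((nat \<Rightarrow> nat) \<Rightarrow> real) \<Rightarrow> (nat \<Rightarrow> nat) \<Rightarrow> complex" where
  "Qhat d p Q l = (1 / of_nat (period_prod d p)) *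
     (\<Sum>n\<in>verts d p. exp (- 2 * pi * \<i> *
        (\<Sum>j<d. of_nat (l j * n j) / of_nat (p j))) * complex_of_real (Q n))"

end

theory Submission
  imports Defs "HOL-Library.FuncSet"
begin

(* Only loops close up after one step, and a closed path of length two through a loop
   stays at its vertex, so it is a loop traversed twice; hence I_1 and I_2 are the sums of
   Q and Q^2/2 over the vertices.
   Lifted to Z^d, a closed path moves in direction i by p_i times its index.  A prime cycle
   of length p_j + 2 and index e_j that uses a loop therefore consists of two loops and p_j
   forward steps in direction j: up to rotation it starts at a vertex w with w_j = 0, runs
   once around the j-th circle and pauses at w + a e_j and w + b e_j for some a <= b, with
   weight Q(w + a e_j) Q(w + b e_j).  Summing over a <= b gives half of the squared fibre
   sums of Q plus I_2.  Orthogonality of the characters of Z/p_1 x ... x Z/p_d (Parseval)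
   turns these sums of squares into the sums of |Q^|^2 over V_* and over n_j = 0. *)

lemma sum_list_map_rotate:
  fixes f :: "'a \<Rightarrow> 'b::comm_monoid_add"
  shows "(\<Sum>x\<leftarrow>rotate k xs. f x) = (\<Sum>x\<leftarrow>xs. f x)"
proof -
  let ?n = "k mod length xs"
  have "(\<Sum>x\<leftarrow>rotate k xs. f x) = (\<Sum>x\<leftarrow>drop ?n xs. f x) + (\<Sum>x\<leftarrow>take ?n xs. f x)"
    by (simp add: rotate_drop_take)
  also have "\<dots> = (\<Sum>x\<leftarrow>take ?n xs @ drop ?n xs. f x)"
    by (simp only: map_append sum_list_append add.commute)
  finally show ?thesis by (simp only: append_take_drop_id)
qed

lemma prod_list_map_rotate:
  fixes f :: "'a \<Rightarrow> 'b::comm_monoid_mult"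
  shows "(\<Prod>x\<leftarrow>rotate k xs. f x) = (\<Prod>x\<leftarrow>xs. f x)"
proof -
  let ?n = "k mod length xs"
  have "(\<Prod>x\<leftarrow>rotate k xs. f x) = (\<Prod>x\<leftarrow>drop ?n xs. f x) * (\<Prod>x\<leftarrow>take ?n xs. f x)"
    by (simp add: rotate_drop_take)
  also have "\<dots> = (\<Prod>x\<leftarrow>take ?n xs @ drop ?n xs. f x)"
    by (simp only: map_append prod_list.append mult.commute)
  finally show ?thesis by (simp only: append_take_drop_id)
qed

lemma in_cyc_class_self: "c \<in> cyc_class c"
  unfolding cyc_class_def by (metis rangeI rotate0 id_apply)

lemma cyc_class_rotate: "cyc_class (rotate m c) = cyc_class c"
proof -
  have "rotate k c = rotate (k + (length c - 1) * m) (rotate m c)" for k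
  proof (cases "c = []")
    case False
    then have "k + (length c - 1) * m + m = k + m * length c"
      by (cases "length c") (auto simp: algebra_simps)
    then have "rotate k c = rotate (k + (length c - 1) * m + m) c"
      by (metis rotate_conv_mod mod_mult_self1)
    then show ?thesis by (simp add: rotate_rotate)
  qed simp
  then show ?thesis unfolding cyc_class_def by (auto simp: rotate_rotate)
qed

lemma cyc_class_eq_imp_rotate: "cyc_class c = cyc_class c' \<Longrightarrow> \<exists>k. c' = rotate k c"
  using in_cyc_class_self[of c'] unfolding cyc_class_def by auto

lemma cyc_rep_cyc_class: "\<exists>k. cyc_rep (cyc_class c) = rotate k c"
  using someI[of "\<lambda>x. x \<in> cyc_class c", OF in_cyc_class_self]
  unfolding cyc_rep_def cyc_class_def by auto

lemma cyc_len_cyc_class: "cyc_len (cyc_class c) = length c"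
  using cyc_rep_cyc_class[of c] unfolding cyc_len_def by auto

lemma cyc_index_cyc_class: "cyc_index p (cyc_class c) = (\<lambda>i. \<Sum>e\<leftarrow>c. eidx p e i)"
  using cyc_rep_cyc_class[of c] unfolding cyc_index_def by (auto simp: sum_list_map_rotate)

lemma cyc_weight_cyc_class: "cyc_weight Q (cyc_class c) = (\<Prod>e\<leftarrow>c. eweight Q e)"
  using cyc_rep_cyc_class[of c] unfolding cyc_weight_def by (auto simp: prod_list_map_rotate)

lemma closed_path_iff_map:
  "closed_path E p c \<longleftrightarrow> c \<noteq> [] \<and> set c \<subseteq> E \<and> map (etgt p) c = map esrc (rotate1 c)"
  unfolding closed_path_def list_eq_iff_nth_eq by (auto simp: nth_rotate1)

lemma closed_path_rotate: "closed_path E p c \<Longrightarrow> closed_path E p (rotate m c)"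
  by (simp add: closed_path_iff_map rotate1_rotate_swap flip: rotate_map)

lemma rotate_concat_replicate: "rotate (length u) (concat (replicate r u)) = concat (replicate r u)"
proof (cases r)
  case (Suc n)
  have "concat (replicate n u) @ u = concat (replicate n u @ [u])" by simp
  also have "\<dots> = u @ concat (replicate n u)" by (simp only: replicate_append_same) simp
  finally show ?thesis using Suc by (simp add: rotate_append)
qed simp

lemma repetition_free_if_unique_position:
  assumes "k < length xs" "P (xs ! k)" "\<And>k'. k' < length xs \<Longrightarrow> P (xs ! k') \<Longrightarrow> k' = k"
  shows "repetition_free xs"
  unfolding repetition_free_def
proof clarify
  fix r u assume r: "2 \<le> r" and xs: "xs = concat (replicate r u)"
  have len: "length xs = r * length u" unfolding xs by (induction r) auto
  then have u: "0 < length u" "length u < length xs" using assms(1) r by (auto intro: less_le_trans)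
  have "rotate (length u) xs = xs" unfolding xs by (rule rotate_concat_replicate)
  then have "xs ! k = xs ! ((length u + k) mod length xs)"
    using nth_rotate[OF assms(1), of "length u"] by simp
  moreover have "(length u + k) mod length xs < length xs" using assms(1) by (intro mod_less_divisor) linarith
  ultimately have m: "(length u + k) mod length xs = k" using assms(2,3) by metis
  show False
  proof (cases "length u + k < length xs")
    case True
    then show False using m u by simp
  next
    case False
    then have "(length u + k) mod length xs = length u + k - length xs"
      using u assms(1) by (simp add: le_mod_geq)
    then show False using m u by simp
  qed
qed

lemma mod_edgesE:
  assumes "e \<in> mod_edges d p"
  obtains v where "v \<in> verts d p" "e = Loop v"
  | v i b where "v \<in> verts d p" "i < d" "e = Step v i b"
  using assms unfolding mod_edges_def orig_edges_def by auto

lemma esrc_in_verts: "e \<in> mod_edges d p \<Longrightarrow> esrc e \<in> verts d p"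
  by (cases rule: mod_edgesE) auto

lemma finite_verts: "finite (verts d p)"
proof (rule finite_subset)
  let ?M = "\<Sum>i<d. p i"
  show "verts d p \<subseteq> {n. \<forall>i. (i \<in> {..<d} \<longrightarrow> n i \<in> {..<?M}) \<and> (i \<notin> {..<d} \<longrightarrow> n i = 0)}"
  proof (clarsimp simp: verts_def)
    fix n i assume "\<forall>j<d. n j < p j" "i < d"
    moreover have "p i \<le> ?M" using \<open>i < d\<close> by (intro member_le_sum) auto
    ultimately show "n i < ?M" by (meson less_le_trans)
  qed
qed (intro finite_set_of_finite_funs; simp)

lemma add_one_mod_eq: "x < P \<Longrightarrow> (x + 1) mod P = (if x = P - 1 then 0 else x + 1)"
  for x P :: nat
  by (simp add: Suc_lessI)

lemma add_pred_mod_eq: "x < P \<Longrightarrow> (x + P - 1) mod P = (if x = 0 then P - 1 else x - 1)"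
  for x P :: nat
  by (cases x) (simp_all add: Suc_lessD)

fun displacement :: "edge \<Rightarrow> nat \<Rightarrow> int" where
  "displacement (Step v j b) = (if b then unitv j else (\<lambda>i. - unitv j i))"
| "displacement (Loop v) = (\<lambda>_. 0)"

(* The lift of e to Z^d moves coordinate i by the displacement, except that the coordinate
   jumps back by p_i whenever e leaves the fundamental domain, which is what eidx records. *)
lemma etgt_minus_esrc:
  assumes "e \<in> mod_edges d p"
  shows "int (etgt p e i) - int (esrc e i) = displacement e i - int (p i) * eidx p e i"
  using assms
proof (cases rule: mod_edgesE)
  case (2 v j b)
  then have "v j < p j" unfolding verts_def by auto
  with 2 show ?thesis
    by (cases b) (auto simp: unitv_def add_one_mod_eq add_pred_mod_eq[simplified] of_nat_diff)
qed simp

lemma etgt_Step_neq: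
  assumes "v \<in> verts d p" "i < d" "p i \<ge> 2"
  shows "etgt p (Step v i b) \<noteq> v"
proof
  assume "etgt p (Step v i b) = v"
  then have "displacement (Step v i b) i = int (p i) * eidx p (Step v i b) i"
    using etgt_minus_esrc[of "Step v i b" d p i] assms(1,2)
    unfolding mod_edges_def orig_edges_def by auto
  then show False using assms(3) by (cases b) (auto simp: unitv_def split: if_splits)
qed

lemma closed_edge_is_Loop:
  assumes "e \<in> mod_edges d p" "etgt p e = esrc e" "\<forall>i<d. p i \<ge> 2"
  shows "e = Loop (esrc e)"
  using assms(1) by (cases rule: mod_edgesE) (use assms etgt_Step_neq in auto)

definition added_prime_cycles :: "nat \<Rightarrow> (nat \<Rightarrow> nat) \<Rightarrow> edge list set set" where
  "added_prime_cycles d p = prime_cycles (mod_edges d p) p - prime_cycles (orig_edges d p) p"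

lemma closed_path_orig_edges_iff:
  "closed_path (orig_edges d p) p c \<longleftrightarrow> closed_path (mod_edges d p) p c \<and> (\<forall>v. Loop v \<notin> set c)"
  unfolding closed_path_def mod_edges_def orig_edges_def by auto

lemma added_prime_cyclesE:
  assumes "C \<in> added_prime_cycles d p"
  obtains c v where "C = cyc_class c" "closed_path (mod_edges d p) p c" "repetition_free c"
    "Loop v \<in> set c"
proof -
  obtain c where c: "C = cyc_class c" "closed_path (mod_edges d p) p c" "repetition_free c"
    using assms unfolding added_prime_cycles_def prime_cycles_def by auto
  moreover have "\<not> closed_path (orig_edges d p) p c"
    using assms c unfolding added_prime_cycles_def prime_cycles_def by auto
  ultimately show thesis using that closed_path_orig_edges_iff by blast
qed

lemma added_prime_cyclesI:
  assumes "closed_path (mod_edges d p) p c" "repetition_free c" "Loop v \<in> set c"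
  shows "cyc_class c \<in> added_prime_cycles d p"
proof -
  have "c' \<notin> cyc_class c" if "closed_path (orig_edges d p) p c'" for c'
    using that assms(3) closed_path_orig_edges_iff unfolding cyc_class_def by auto
  then have "cyc_class c \<notin> prime_cycles (orig_edges d p) p"
    unfolding prime_cycles_def using in_cyc_class_self by blast
  then show ?thesis using assms(1,2) unfolding added_prime_cycles_def prime_cycles_def by auto
qed

lemma I_terms_eq:
  "I_terms d p n = {(r, C). r \<in> {1..n} \<and> C \<in> added_prime_cycles d p \<and> r * cyc_len C = n}"
  unfolding I_terms_def added_prime_cycles_def ..

lemma repetition_free_singleton: "repetition_free [e]"
  by (rule repetition_free_if_unique_position[of 0 _ "\<lambda>_. True"]) auto

lemma closed_path_singleton:
  assumes "closed_path (mod_edges d p) p [e]" "\<forall>i<d. p i \<ge> 2"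
  shows "e = Loop (esrc e)"
  using assms closed_edge_is_Loop unfolding closed_path_def by auto

lemma closed_path_pair_Loop:
  assumes "closed_path (mod_edges d p) p [e1, e2]" "Loop v \<in> {e1, e2}" "\<forall>i<d. p i \<ge> 2"
  shows "e1 = Loop v \<and> e2 = Loop v"
proof -
  have step: "etgt p ([e1, e2] ! i) = esrc ([e1, e2] ! ((i + 1) mod 2))" if "i < 2" for i
    using assms(1) that unfolding closed_path_def by (simp add: numeral_2_eq_2)
  have E: "e1 \<in> mod_edges d p" "e2 \<in> mod_edges d p" "etgt p e1 = esrc e2" "etgt p e2 = esrc e1"
    using assms(1) step[of 0] step[of 1] unfolding closed_path_def by auto
  show ?thesis using assms(2) closed_edge_is_Loop[OF E(1) _ assms(3)] closed_edge_is_Loop[OF E(2) _ assms(3)] E(3,4)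
    by auto
qed

lemma I_terms_1_2:
  assumes "n \<in> {1, 2}" "\<forall>i<d. p i \<ge> 2"
  shows "I_terms d p n = (\<lambda>v. (n, cyc_class [Loop v])) ` verts d p"
proof (intro antisym subsetI)
  fix x assume "x \<in> I_terms d p n"
  then obtain r C where x: "x = (r, C)" "r \<in> {1..n}" "C \<in> added_prime_cycles d p"
    "r * cyc_len C = n"
    unfolding I_terms_eq by auto
  then obtain c v where c: "C = cyc_class c" "closed_path (mod_edges d p) p c" "repetition_free c"
    "Loop v \<in> set c"
    by (auto elim: added_prime_cyclesE)
  have "r = 1 \<or> r = 2" using x(2) assms(1) by auto
  then have "length c = 1 \<or> (length c = 2 \<and> r = 1)"
    using x(4) assms(1) c(1) by (auto simp: cyc_len_cyc_class)
  then show "x \<in> (\<lambda>v. (n, cyc_class [Loop v])) ` verts d p"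
  proof
    assume "length c = 1"
    then obtain e where "c = [e]" by (auto simp: length_Suc_conv)
    then have "c = [Loop v]" "v \<in> verts d p"
      using c(2,4) closed_path_singleton assms(2) unfolding closed_path_def mod_edges_def orig_edges_def
      by auto
    then show ?thesis using x c(1) by (auto simp: cyc_len_cyc_class)
  next
    assume "length c = 2 \<and> r = 1"
    then obtain e1 e2 where "c = [e1, e2]" by (auto simp: length_Suc_conv numeral_2_eq_2)
    moreover from this have "e1 = Loop v \<and> e2 = Loop v"
      using closed_path_pair_Loop c(2,4) assms(2) by simp
    ultimately have "c = concat (replicate 2 [Loop v])" by (simp add: numeral_2_eq_2)
    then show ?thesis using c(3) unfolding repetition_free_def by blast
  qed
next
  fix x assume "x \<in> (\<lambda>v. (n, cyc_class [Loop v])) ` verts d p"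
  then obtain v where "x = (n, cyc_class [Loop v])" "v \<in> verts d p" by auto
  moreover have "closed_path (mod_edges d p) p [Loop v]" if "v \<in> verts d p"
    using that unfolding closed_path_def mod_edges_def by auto
  ultimately show "x \<in> I_terms d p n"
    using assms(1) added_prime_cyclesI[OF _ repetition_free_singleton]
    unfolding I_terms_eq by (auto simp: cyc_len_cyc_class)
qed

lemma I_all_1_2:
  assumes "n \<in> {1, 2}" "\<forall>i<d. p i \<ge> 2"
  shows "I_all d p n Q = (\<Sum>v\<in>verts d p. Q v ^ n) / n"
proof -
  have "inj_on (\<lambda>v. (n, cyc_class [Loop v])) (verts d p)"
    by (auto intro!: inj_onI dest: cyc_class_eq_imp_rotate)
  then show ?thesis
    unfolding I_all_def I_terms_1_2[OF assms] sum_divide_distrib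
    by (simp add: sum.reindex cyc_weight_cyc_class)
qed

lemma closed_path_sum_displacement:
  assumes "closed_path (mod_edges d p) p c"
  shows "(\<Sum>e\<leftarrow>c. displacement e i) = int (p i) * (\<Sum>e\<leftarrow>c. eidx p e i)"
proof -
  have "map (etgt p) c = map esrc (rotate1 c)" using assms unfolding closed_path_iff_map by blast
  then have "(\<Sum>v\<leftarrow>map (etgt p) c. int (v i)) = (\<Sum>v\<leftarrow>map esrc (rotate1 c). int (v i))" by simp
  then have "(\<Sum>e\<leftarrow>c. int (etgt p e i)) = (\<Sum>e\<leftarrow>rotate1 c. int (esrc e i))"
    by (simp only: map_map comp_def)
  then have "(\<Sum>e\<leftarrow>c. int (etgt p e i) - int (esrc e i)) = 0"
    by (simp add: sum_list_subtractf sum_list_map_rotate[of _ 1, simplified])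
  moreover have "(\<Sum>e\<leftarrow>c. int (etgt p e i) - int (esrc e i))
      = (\<Sum>e\<leftarrow>c. displacement e i - int (p i) * eidx p e i)"
    using assms etgt_minus_esrc unfolding closed_path_def by (intro arg_cong[of _ _ sum_list] map_cong) auto
  ultimately show ?thesis by (simp add: sum_list_subtractf sum_list_const_mult)
qed

lemma nonneg_int_sum_eq_1E:
  fixes w :: "'a \<Rightarrow> int"
  assumes "finite A" "\<And>k. k \<in> A \<Longrightarrow> w k \<ge> 0" "sum w A = 1"
  obtains k where "k \<in> A" "w k = 1" "\<And>k'. k' \<in> A \<Longrightarrow> k' \<noteq> k \<Longrightarrow> w k' = 0"
proof -
  obtain k where k: "k \<in> A" "w k \<noteq> 0"
    using assms(3) by (metis sum.neutral zero_neq_one)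
  have "sum w A = w k + sum w (A - {k})" using assms(1) k(1) by (simp add: sum.remove)
  moreover have "sum w (A - {k}) \<ge> 0" using assms(2) by (intro sum_nonneg) auto
  moreover have "w k \<ge> 1" using k assms(2) by fastforce
  ultimately have "w k = 1" "sum w (A - {k}) = 0" using assms(3) by linarith+
  moreover have "w k' = 0" if "k' \<in> A" "k' \<noteq> k" for k'
    using \<open>sum w (A - {k}) = 0\<close> assms(1,2) that sum_nonneg_eq_0_iff[of "A - {k}" w] by auto
  ultimately show ?thesis using that k(1) by blast
qed

lemma displacement_le_1: "displacement e i \<le> 1"
  by (cases e) (auto simp: unitv_def)

lemma displacement_eq_1_iff: "displacement e j = 1 \<longleftrightarrow> (\<exists>u. e = Step u j True)"
  by (cases e) (auto simp: unitv_def)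

definition pauses_at :: "nat \<Rightarrow> nat \<Rightarrow> nat \<Rightarrow> edge list \<Rightarrow> bool" where
  "pauses_at j k1 k2 c \<longleftrightarrow> k1 < k2 \<and> k2 < length c \<and>
    (\<forall>k<length c. if k = k1 \<or> k = k2 then \<exists>u. c ! k = Loop u else \<exists>u. c ! k = Step u j True)"

lemma pauses_at_unique:
  assumes "pauses_at j k1 k2 c" "pauses_at j k1' k2' c"
  shows "k1' = k1 \<and> k2' = k2"
proof -
  have loops: "k = k1 \<or> k = k2 \<longleftrightarrow> k = k1' \<or> k = k2'" if "k < length c" for k
    using assms that unfolding pauses_at_def by (auto dest!: spec[of _ k] split: if_splits)
  have "k1 = k1' \<or> k1 = k2'" "k2 = k1' \<or> k2 = k2'" "k1' = k1 \<or> k1' = k2" "k2' = k1 \<or> k2' = k2"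
    using loops[of k1] loops[of k2] loops[of k1'] loops[of k2'] assms unfolding pauses_at_def by auto
  then show ?thesis using assms unfolding pauses_at_def by linarith
qed

lemma unit_index_path_pauses:
  assumes cp: "closed_path (mod_edges d p) p c" and len: "length c = p j + 2"
    and loop: "Loop u \<in> set c" and idx: "(\<lambda>i. \<Sum>e\<leftarrow>c. eidx p e i) = unitv j"
  obtains k1 k2 where "pauses_at j k1 k2 c"
proof -
  let ?N = "length c"
  have D: "(\<Sum>k<?N. displacement (c ! k) i) = int (p i) * unitv j i" for i
    using closed_path_sum_displacement[OF cp, of i] fun_cong[OF idx, of i]
    by (simp add: sum_list_sum_nth atLeast0LessThan)
  obtain k0 where k0: "k0 < ?N" "c ! k0 = Loop u" using loop by (metis in_set_conv_nth)
  \<comment> \<open>Each edge advances at most one step in direction j, and p_j in total.\<close>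
  define w where "w k = 1 - displacement (c ! k) j" for k
  have "sum w {..<?N} = 2" unfolding w_def using D[of j] len by (simp add: sum_subtractf unitv_def)
  moreover have "w k0 = 1" unfolding w_def using k0 by simp
  ultimately have "sum w ({..<?N} - {k0}) = 1" using k0(1) by (simp add: sum.remove)
  then obtain k1 where k1': "k1 \<in> {..<?N} - {k0}" "w k1 = 1"
    "\<And>k. k \<in> {..<?N} - {k0} \<Longrightarrow> k \<noteq> k1 \<Longrightarrow> w k = 0"
    by (rule nonneg_int_sum_eq_1E[rotated 2]) (auto simp: w_def displacement_le_1)
  then have k1: "k1 < ?N" "k1 \<noteq> k0" "w k1 = 1"
    and w0: "\<And>k. k < ?N \<Longrightarrow> k \<noteq> k0 \<Longrightarrow> k \<noteq> k1 \<Longrightarrow> w k = 0"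
    by auto
  have steps: "\<exists>u. c ! k = Step u j True" if "k < ?N" "k \<noteq> k0" "k \<noteq> k1" for k
    using w0[OF that] unfolding w_def by (simp add: displacement_eq_1_iff)
  have "\<exists>u. c ! k1 = Loop u"
  proof (rule ccontr)
    assume "\<nexists>u. c ! k1 = Loop u"
    then obtain v i b where s: "c ! k1 = Step v i b" by (cases "c ! k1") auto
    have "i \<noteq> j" using k1(3) s unfolding w_def by (cases b) (auto simp: unitv_def)
    have "displacement (c ! k) i = 0" if "k \<in> {..<?N} - {k1}" for k
      using that k0 steps[of k] \<open>i \<noteq> j\<close> by (cases "k = k0") (auto simp: unitv_def)
    then have "(\<Sum>k<?N. displacement (c ! k) i) = (\<Sum>k\<in>{k1}. displacement (c ! k) i)"
      using k1(1) by (intro sum.mono_neutral_right) auto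
    then show False using D[of i] \<open>i \<noteq> j\<close> s by (cases b) (auto simp: unitv_def)
  qed
  then have "pauses_at j (min k0 k1) (max k0 k1) c"
    using k0 k1 steps unfolding pauses_at_def by (auto simp: min_def max_def)
  then show thesis by (rule that)
qed

lemma pauses_at_wrap_position:
  assumes "pauses_at j k1 k2 c" and "(\<Sum>e\<leftarrow>c. eidx p e j) = 1"
  obtains kw where "kw < length c" "eidx p (c ! kw) j = 1"
    "\<And>k. k < length c \<Longrightarrow> k \<noteq> kw \<Longrightarrow> eidx p (c ! k) j = 0"
proof -
  have nonneg: "eidx p (c ! k) j \<ge> 0" if "k < length c" for k
    using assms(1) that unfolding pauses_at_def by (auto dest!: spec[of _ k] simp: unitv_def split: if_splits)
  have "(\<Sum>k<length c. eidx p (c ! k) j) = 1"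
    using assms(2) by (simp add: sum_list_sum_nth atLeast0LessThan)
  then obtain kw where "kw \<in> {..<length c}" "eidx p (c ! kw) j = 1"
    "\<And>k. k \<in> {..<length c} \<Longrightarrow> k \<noteq> kw \<Longrightarrow> eidx p (c ! k) j = 0"
    by (rule nonneg_int_sum_eq_1E[rotated 2]) (auto simp: nonneg)
  then show thesis using that by auto
qed

(* The j-coordinate reached after k edges of a walk around the j-th circle that pauses
   (takes a loop) at the steps k1 < k2. *)
definition walk_pos :: "nat \<Rightarrow> nat \<Rightarrow> nat \<Rightarrow> nat" where
  "walk_pos k1 k2 k = k - (if k1 < k then 1 else 0) - (if k2 < k then 1 else 0)"

definition pausing_edge :: "nat \<Rightarrow> (nat \<Rightarrow> nat) \<Rightarrow> nat \<Rightarrow> nat \<Rightarrow> nat \<Rightarrow> edge" where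
  "pausing_edge j w k1 k2 k =
    (if k = k1 \<or> k = k2 then Loop (w(j := walk_pos k1 k2 k)) else Step (w(j := walk_pos k1 k2 k)) j True)"

definition pausing_walk :: "(nat \<Rightarrow> nat) \<Rightarrow> nat \<Rightarrow> (nat \<Rightarrow> nat) \<Rightarrow> nat \<Rightarrow> nat \<Rightarrow> edge list" where
  "pausing_walk p j w k1 k2 = map (pausing_edge j w k1 k2) [0..<p j + 2]"

lemma walk_pos_0 [simp]: "walk_pos k1 k2 0 = 0"
  by (simp add: walk_pos_def)

lemma walk_pos_Suc:
  "k1 < k2 \<Longrightarrow> walk_pos k1 k2 (Suc k) = (if k = k1 \<or> k = k2 then walk_pos k1 k2 k else Suc (walk_pos k1 k2 k))"
  by (auto simp: walk_pos_def)

lemma esrc_nth_eq_walk_pos: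
  assumes cp: "closed_path (mod_edges d p) p c" and j: "j < d" and pauses: "pauses_at j k1 k2 c"
    and no_wrap: "\<And>k. k < length c - 1 \<Longrightarrow> eidx p (c ! k) j = 0"
    and start: "esrc (c ! 0) j = 0"
  shows "k < length c \<Longrightarrow> esrc (c ! k) = (esrc (c ! 0))(j := walk_pos k1 k2 k)"
proof (induction k)
  case 0
  then show ?case using start by (simp add: fun_upd_idem)
next
  case (Suc k)
  let ?w = "esrc (c ! 0)"
  have k12: "k1 < k2" and edge: "if k = k1 \<or> k = k2 then \<exists>u. c ! k = Loop u else \<exists>u. c ! k = Step u j True"
    using pauses Suc.prems unfolding pauses_at_def by auto
  have IH: "esrc (c ! k) = ?w(j := walk_pos k1 k2 k)" using Suc.prems by (intro Suc.IH) simp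
  have "esrc (c ! Suc k) = etgt p (c ! k)"
    using cp Suc.prems unfolding closed_path_def by (metis Suc_lessD mod_less Suc_eq_plus1)
  also have "\<dots> = ?w(j := walk_pos k1 k2 (Suc k))"
  proof (cases "k = k1 \<or> k = k2")
    case True
    then obtain u where "c ! k = Loop u" using edge by auto
    then have "etgt p (c ! k) = esrc (c ! k)" by simp
    then show ?thesis using IH by (simp only: walk_pos_Suc[OF k12] True if_True)
  next
    case False
    then obtain u where u: "c ! k = Step u j True" using edge by auto
    then have "u \<in> verts d p"
      using cp Suc.prems esrc_in_verts unfolding closed_path_def by (metis Suc_lessD esrc.simps(1) nth_mem subsetD)
    then have "u j < p j" using j unfolding verts_def by auto
    moreover have "u j \<noteq> p j - 1" using no_wrap[of k] Suc.prems u by (auto simp: unitv_def less_diff_conv)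
    ultimately show ?thesis using u IH False by (simp add: walk_pos_Suc[OF k12])
  qed
  finally show ?case .
qed

lemma closed_path_eq_pausing_walk:
  assumes cp: "closed_path (mod_edges d p) p c" and len: "length c = p j + 2" and j: "j < d"
    and pauses: "pauses_at j k1 k2 c"
    and wrap: "eidx p (c ! (length c - 1)) j = 1"
    and no_wrap: "\<And>k. k < length c - 1 \<Longrightarrow> eidx p (c ! k) j = 0"
  shows "k2 < p j + 1 \<and> esrc (c ! 0) \<in> verts d p \<and> esrc (c ! 0) j = 0 \<and>
    c = pausing_walk p j (esrc (c ! 0)) k1 k2"
proof -
  let ?N = "length c" and ?w = "esrc (c ! 0)"
  have edge: "if k = k1 \<or> k = k2 then \<exists>u. c ! k = Loop u else \<exists>u. c ! k = Step u j True"
    if "k < ?N" for k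
    using pauses that unfolding pauses_at_def by auto
  have edges: "c ! k \<in> mod_edges d p" if "k < ?N" for k
    using cp that unfolding closed_path_def by auto
  have "\<exists>u. c ! k2 = Loop u" using edge[of k2] pauses unfolding pauses_at_def by auto
  then have "k2 \<noteq> ?N - 1" using wrap by auto
  then have k2: "k2 < p j + 1" using pauses len unfolding pauses_at_def by linarith
  moreover have "?N - 1 \<noteq> k1" using pauses k2 len unfolding pauses_at_def by auto
  ultimately have "\<exists>v. c ! (?N - 1) = Step v j True" using edge[of "?N - 1"] len by simp
  then obtain v where v: "c ! (?N - 1) = Step v j True" ..
  then have "v j = p j - 1" using wrap by (auto simp: unitv_def split: if_splits)
  moreover have "v j < p j"
    using esrc_in_verts[OF edges[of "?N - 1"]] v j len unfolding verts_def by auto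
  moreover have "etgt p (c ! (?N - 1)) = esrc (c ! ((?N - 1 + 1) mod ?N))"
    using cp len unfolding closed_path_def by simp
  then have "?w = etgt p (c ! (?N - 1))" using len by simp
  ultimately have w: "?w = v(j := 0)" using v by simp
  have src: "esrc (c ! k) = ?w(j := walk_pos k1 k2 k)" if "k < ?N" for k
    using esrc_nth_eq_walk_pos[OF cp j pauses no_wrap] w that by simp
  have "?w \<in> verts d p" using esrc_in_verts[OF edges[of 0]] len by simp
  moreover have "?w j = 0" using w by simp
  moreover have "c = pausing_walk p j ?w k1 k2"
  proof (rule nth_equalityI)
    fix k assume k: "k < ?N"
    then have "pausing_walk p j ?w k1 k2 ! k = pausing_edge j ?w k1 k2 k"
      using len unfolding pausing_walk_def by (simp del: upt_Suc)
    moreover have "c ! k = pausing_edge j ?w k1 k2 k"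
      using edge[OF k] src[OF k] unfolding pausing_edge_def by (cases "c ! k") (auto split: if_splits)
    ultimately show "c ! k = pausing_walk p j ?w k1 k2 ! k" by simp
  qed (simp add: len pausing_walk_def)
  ultimately show ?thesis using k2 by blast
qed

locale pausing_walk_params =
  fixes d :: nat and p :: "nat \<Rightarrow> nat" and j :: nat and w :: "nat \<Rightarrow> nat" and k1 k2 :: nat
  assumes j: "j < d" and w: "w \<in> verts d p" "w j = 0"
    and k12: "k1 < k2" "k2 < p j + 1"
begin

abbreviation "N \<equiv> p j + 2"
abbreviation "walk_edge \<equiv> pausing_edge j w k1 k2"
abbreviation "walk \<equiv> pausing_walk p j w k1 k2"

lemma walk_pos_le: "k < N \<Longrightarrow> walk_pos k1 k2 k \<le> p j - 1"
  using k12 unfolding walk_pos_def by auto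

lemma walk_pos_step_lt: "k < N - 1 \<Longrightarrow> k \<noteq> k1 \<Longrightarrow> k \<noteq> k2 \<Longrightarrow> walk_pos k1 k2 k < p j - 1"
  using k12 unfolding walk_pos_def by auto

lemma walk_pos_last: "walk_pos k1 k2 (N - 1) = p j - 1"
  using k12 unfolding walk_pos_def by auto

lemma length_pausing_walk [simp]: "length walk = N"
  by (simp add: pausing_walk_def)

lemma nth_pausing_walk: "k < N \<Longrightarrow> walk ! k = walk_edge k"
  unfolding pausing_walk_def by (simp del: upt_Suc)

lemma pausing_edge_mem: "k < N \<Longrightarrow> walk_edge k \<in> mod_edges d p"
  using walk_pos_le[of k] w j unfolding pausing_edge_def mod_edges_def orig_edges_def verts_def
  by auto

lemma etgt_pausing_edge: "k < N \<Longrightarrow> etgt p (walk_edge k) = esrc (walk_edge ((k + 1) mod N))"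
proof (cases "k = N - 1")
  case True
  then show ?thesis using k12 walk_pos_last w(2) by (auto simp: pausing_edge_def fun_upd_idem)
next
  case False
  assume "k < N"
  with False have "(k + 1) mod N = Suc k" by simp
  moreover have "(walk_pos k1 k2 k + 1) mod p j = walk_pos k1 k2 k + 1" if "k \<noteq> k1" "k \<noteq> k2"
    using walk_pos_step_lt[of k] that False \<open>k < N\<close> by simp
  ultimately show ?thesis using k12 by (auto simp: pausing_edge_def walk_pos_Suc)
qed

lemma closed_path_pausing_walk: "closed_path (mod_edges d p) p walk"
  unfolding closed_path_def
proof (intro conjI allI impI)
  show "walk \<noteq> []" by (simp add: pausing_walk_def)
  show "set walk \<subseteq> mod_edges d p" unfolding pausing_walk_def using pausing_edge_mem by auto
  fix i assume "i < length walk"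
  then have "i < N" "(i + 1) mod N < N" by simp_all
  then show "etgt p (walk ! i) = esrc (walk ! ((i + 1) mod length walk))"
    using etgt_pausing_edge by (simp only: nth_pausing_walk length_pausing_walk)
qed

lemma eidx_pausing_edge: "k < N \<Longrightarrow> eidx p (walk_edge k) = (if k = N - 1 then unitv j else (\<lambda>_. 0))"
  using k12 walk_pos_step_lt[of k] walk_pos_last by (auto simp: pausing_edge_def)

lemma index_pausing_walk: "(\<lambda>i. \<Sum>e\<leftarrow>walk. eidx p e i) = unitv j"
proof
  fix i
  have "(\<Sum>e\<leftarrow>walk. eidx p e i) = (\<Sum>k<N. eidx p (walk ! k) i)"
    by (simp add: sum_list_sum_nth atLeast0LessThan del: length_pausing_walk) simp
  also have "\<dots> = (\<Sum>k<N. if k = N - 1 then unitv j i else 0)"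
    by (intro sum.cong) (auto simp: nth_pausing_walk eidx_pausing_edge)
  also have "\<dots> = unitv j i" by simp
  finally show "(\<Sum>e\<leftarrow>walk. eidx p e i) = unitv j i" .
qed

lemma weight_pausing_walk: "(\<Prod>e\<leftarrow>walk. eweight Q e) = Q (w(j := k1)) * Q (w(j := k2 - 1))"
proof -
  have "(\<Prod>e\<leftarrow>walk. eweight Q e) = (\<Prod>k<N. eweight Q (walk_edge k))"
    by (simp add: prod.list_conv_set_nth atLeast0LessThan nth_pausing_walk)
  also have "\<dots> = (\<Prod>k\<in>{k1, k2}. eweight Q (walk_edge k))"
    using k12 by (intro prod.mono_neutral_right) (auto simp: pausing_edge_def)
  also have "\<dots> = Q (w(j := k1)) * Q (w(j := k2 - 1))"
    using k12 by (simp add: pausing_edge_def walk_pos_def)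
  finally show ?thesis .
qed

lemma Loop_in_pausing_walk: "Loop (w(j := k1)) \<in> set walk"
  using k12 nth_mem[of k1 walk] by (simp add: nth_pausing_walk pausing_edge_def walk_pos_def)

lemma eidx_pausing_walk_nonzero_iff: "k < N \<Longrightarrow> eidx p (walk ! k) j \<noteq> 0 \<longleftrightarrow> k = N - 1"
  by (simp add: nth_pausing_walk eidx_pausing_edge unitv_def)

lemma repetition_free_pausing_walk: "repetition_free walk"
  by (rule repetition_free_if_unique_position[of "N - 1" _ "\<lambda>e. eidx p e j \<noteq> 0"])
    (use eidx_pausing_walk_nonzero_iff in auto)

lemma pauses_at_pausing_walk: "pauses_at j k1 k2 walk"
  using k12 by (simp add: pauses_at_def nth_pausing_walk pausing_edge_def)

lemma esrc_nth_0_pausing_walk: "esrc (walk ! 0) = w"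
  using w(2) by (simp add: nth_pausing_walk pausing_edge_def fun_upd_idem)

end

lemma unit_index_path_rotates_to_pausing_walk:
  assumes cp: "closed_path (mod_edges d p) p c" and len: "length c = p j + 2" and j: "j < d"
    and loop: "Loop u \<in> set c" and idx: "(\<lambda>i. \<Sum>e\<leftarrow>c. eidx p e i) = unitv j"
  obtains m w a b where "w \<in> verts d p" "w j = 0" "a \<le> b" "b < p j"
    "rotate m c = pausing_walk p j w a (Suc b)"
proof -
  let ?N = "length c"
  obtain k1 k2 where "pauses_at j k1 k2 c" using unit_index_path_pauses[OF cp len loop idx] .
  moreover have "(\<Sum>e\<leftarrow>c. eidx p e j) = 1" using fun_cong[OF idx, of j] by (simp add: unitv_def)
  ultimately obtain kw where kw: "kw < ?N" "eidx p (c ! kw) j = 1"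
    by (rule pauses_at_wrap_position)
  \<comment> \<open>With the edge of index e_j last, the path starts at a vertex with w_j = 0.\<close>
  define c' where "c' = rotate (Suc kw) c"
  have cp': "closed_path (mod_edges d p) p c'" unfolding c'_def using cp by (rule closed_path_rotate)
  have len': "length c' = p j + 2" unfolding c'_def using len by simp
  have loop': "Loop u \<in> set c'" unfolding c'_def using loop by simp
  have idx': "(\<lambda>i. \<Sum>e\<leftarrow>c'. eidx p e i) = unitv j"
    unfolding c'_def using idx by (simp only: sum_list_map_rotate)
  have "Suc kw + (?N - 1) = kw + ?N" using kw(1) by simp
  then have "(Suc kw + (?N - 1)) mod ?N = kw" using kw(1) by simp
  moreover have "c' ! (?N - 1) = c ! ((Suc kw + (?N - 1)) mod ?N)"
    unfolding c'_def using kw(1) by (intro nth_rotate) simp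
  ultimately have wrap: "eidx p (c' ! (length c' - 1)) j = 1" using len len' kw(2) by simp
  obtain k1' k2' where pauses': "pauses_at j k1' k2' c'"
    using unit_index_path_pauses[OF cp' len' loop' idx'] .
  moreover have "(\<Sum>e\<leftarrow>c'. eidx p e j) = 1" using fun_cong[OF idx', of j] by (simp add: unitv_def)
  ultimately obtain kw' where "kw' < length c'" "eidx p (c' ! kw') j = 1"
    "\<And>k. k < length c' \<Longrightarrow> k \<noteq> kw' \<Longrightarrow> eidx p (c' ! k) j = 0"
    by (rule pauses_at_wrap_position) blast
  moreover from this have "kw' = length c' - 1" using wrap len' by fastforce
  ultimately have no_wrap: "\<And>k. k < length c' - 1 \<Longrightarrow> eidx p (c' ! k) j = 0" by auto
  have "k2' < p j + 1 \<and> esrc (c' ! 0) \<in> verts d p \<and> esrc (c' ! 0) j = 0 \<and>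
      c' = pausing_walk p j (esrc (c' ! 0)) k1' k2'"
    using closed_path_eq_pausing_walk[OF cp' len' j pauses' wrap no_wrap] .
  then show thesis
    using that[of "esrc (c' ! 0)" k1' "k2' - 1" "Suc kw"] pauses' unfolding c'_def pauses_at_def by auto
qed

(* (w, b, a) stands for the walk from w that pauses at the vertices with j-coordinate a
   and b, i.e. at the steps a and b + 1. *)
definition pausing_params :: "nat \<Rightarrow> (nat \<Rightarrow> nat) \<Rightarrow> nat \<Rightarrow> ((nat \<Rightarrow> nat) \<times> nat \<times> nat) set" where
  "pausing_params d p j = (SIGMA w:{w \<in> verts d p. w j = 0}. SIGMA b:{..<p j}. {..b})"

definition pausing_cycle :: "(nat \<Rightarrow> nat) \<Rightarrow> nat \<Rightarrow> (nat \<Rightarrow> nat) \<times> nat \<times> nat \<Rightarrow> edge list set" where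
  "pausing_cycle p j = (\<lambda>(w, b, a). cyc_class (pausing_walk p j w a (Suc b)))"

lemma pausing_params_iff:
  "(w, b, a) \<in> pausing_params d p j \<longleftrightarrow> w \<in> verts d p \<and> w j = 0 \<and> a \<le> b \<and> b < p j"
  unfolding pausing_params_def by auto

lemma pausing_walk_params_if_pausing_params:
  "j < d \<Longrightarrow> (w, b, a) \<in> pausing_params d p j \<Longrightarrow> pausing_walk_params d p j w a (Suc b)"
  unfolding pausing_params_iff by unfold_locales auto

lemma unit_index_I_terms_eq:
  assumes j: "j < d"
  shows "{x \<in> I_terms d p (p j + 2). (\<lambda>i. int (fst x) * cyc_index p (snd x) i) = unitv j}
    = (\<lambda>x. (1, pausing_cycle p j x)) ` pausing_params d p j"
proof (intro antisym subsetI)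
  fix x assume "x \<in> {x \<in> I_terms d p (p j + 2). (\<lambda>i. int (fst x) * cyc_index p (snd x) i) = unitv j}"
  then obtain r C where x: "x = (r, C)" "r \<ge> 1" "C \<in> added_prime_cycles d p" "r * cyc_len C = p j + 2"
    and ix: "(\<lambda>i. int r * cyc_index p C i) = unitv j"
    unfolding I_terms_eq by auto
  then obtain c u where c: "C = cyc_class c" "closed_path (mod_edges d p) p c" "Loop u \<in> set c"
    by (auto elim: added_prime_cyclesE)
  have "int r * (\<Sum>e\<leftarrow>c. eidx p e j) = 1"
    using fun_cong[OF ix, of j] c(1) by (simp add: cyc_index_cyc_class unitv_def)
  then have r: "r = 1" by (auto simp: zmult_eq_1_iff)
  then have "(\<lambda>i. \<Sum>e\<leftarrow>c. eidx p e i) = unitv j" "length c = p j + 2"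
    using ix x(4) c(1) by (simp_all add: cyc_index_cyc_class cyc_len_cyc_class)
  then obtain m w a b where "w \<in> verts d p" "w j = 0" "a \<le> b" "b < p j"
    "rotate m c = pausing_walk p j w a (Suc b)"
    using unit_index_path_rotates_to_pausing_walk[OF c(2) _ j c(3)] by metis
  moreover have "C = cyc_class (rotate m c)" using c(1) by (simp add: cyc_class_rotate)
  ultimately show "x \<in> (\<lambda>x. (1, pausing_cycle p j x)) ` pausing_params d p j"
    using x(1) r by (auto simp: pausing_params_iff pausing_cycle_def intro!: image_eqI[of _ _ "(w, b, a)"])
next
  fix x :: "nat \<times> edge list set"
  assume "x \<in> (\<lambda>x. (1, pausing_cycle p j x)) ` pausing_params d p j"
  then obtain w b a where x: "x = (1, pausing_cycle p j (w, b, a))" "(w, b, a) \<in> pausing_params d p j"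
    by auto
  interpret pausing_walk_params d p j w a "Suc b"
    using x(2) by (rule pausing_walk_params_if_pausing_params[OF j])
  have "cyc_class walk \<in> added_prime_cycles d p"
    using closed_path_pausing_walk repetition_free_pausing_walk Loop_in_pausing_walk
    by (rule added_prime_cyclesI)
  then show "x \<in> {x \<in> I_terms d p (p j + 2). (\<lambda>i. int (fst x) * cyc_index p (snd x) i) = unitv j}"
    using x(1) index_pausing_walk
    by (simp add: I_terms_eq pausing_cycle_def cyc_len_cyc_class cyc_index_cyc_class)
qed

lemma inj_on_pausing_cycle:
  assumes j: "j < d"
  shows "inj_on (pausing_cycle p j) (pausing_params d p j)"
proof (rule inj_onI)
  fix x y assume x: "x \<in> pausing_params d p j" and y: "y \<in> pausing_params d p j"
    and eq: "pausing_cycle p j x = pausing_cycle p j y"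
  obtain w b a where x': "x = (w, b, a)" by (cases x) auto
  obtain w' b' a' where y': "y = (w', b', a')" by (cases y) auto
  interpret A: pausing_walk_params d p j w a "Suc b"
    using x unfolding x' by (rule pausing_walk_params_if_pausing_params[OF j])
  interpret B: pausing_walk_params d p j w' a' "Suc b'"
    using y unfolding y' by (rule pausing_walk_params_if_pausing_params[OF j])
  have "cyc_class A.walk = cyc_class B.walk" using eq unfolding x' y' pausing_cycle_def by simp
  then obtain m where m: "B.walk = rotate m A.walk" using cyc_class_eq_imp_rotate by blast
  let ?k = "(m + (A.N - 1)) mod A.N"
  have "B.walk ! (A.N - 1) = A.walk ! ?k" using m by (simp add: nth_rotate)
  then have "eidx p (A.walk ! ?k) j \<noteq> 0" using B.eidx_pausing_walk_nonzero_iff[of "A.N - 1"] by simp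
  then have "?k = A.N - 1" using A.eidx_pausing_walk_nonzero_iff[of ?k] by simp
  have "m mod A.N = (m + A.N) mod A.N" by (rule mod_add_self2[symmetric])
  also have "\<dots> = Suc (m + (A.N - 1)) mod A.N" by (rule arg_cong[where f = "\<lambda>x. x mod A.N"]) simp
  also have "\<dots> = Suc ?k mod A.N" by (simp only: mod_Suc_eq)
  also have "\<dots> = 0" using \<open>?k = A.N - 1\<close> by simp
  finally have "m mod A.N = 0" .
  then have walk: "B.walk = A.walk" using m rotate_conv_mod[of m A.walk] by simp
  then have "w' = w" using A.esrc_nth_0_pausing_walk B.esrc_nth_0_pausing_walk by metis
  moreover have "a' = a \<and> Suc b' = Suc b"
    using pauses_at_unique A.pauses_at_pausing_walk B.pauses_at_pausing_walk walk by metis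
  ultimately show "x = y" unfolding x' y' by simp
qed

lemma I_idx_unitv_eq:
  assumes j: "j < d"
  shows "I_idx d p (p j + 2) (unitv j) Q =
    (\<Sum>w\<in>{w \<in> verts d p. w j = 0}. \<Sum>b<p j. \<Sum>a\<le>b. Q (w(j := a)) * Q (w(j := b)))"
proof -
  have inj: "inj_on (\<lambda>x. (1::nat, pausing_cycle p j x)) (pausing_params d p j)"
    using inj_on_pausing_cycle[OF j] by (auto simp: inj_on_def)
  have "I_idx d p (p j + 2) (unitv j) Q = (\<Sum>x\<in>pausing_params d p j. cyc_weight Q (pausing_cycle p j x))"
    unfolding I_idx_def unit_index_I_terms_eq[OF j] sum.reindex[OF inj] by simp
  also have "\<dots> = (\<Sum>(w, b, a)\<in>pausing_params d p j. Q (w(j := a)) * Q (w(j := b)))"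
  proof (intro sum.cong refl, clarify)
    fix w b a assume "(w, b, a) \<in> pausing_params d p j"
    then interpret pausing_walk_params d p j w a "Suc b"
      by (rule pausing_walk_params_if_pausing_params[OF j])
    show "cyc_weight Q (pausing_cycle p j (w, b, a)) = Q (w(j := a)) * Q (w(j := b))"
      by (simp add: pausing_cycle_def cyc_weight_cyc_class weight_pausing_walk)
  qed
  also have "\<dots> = (\<Sum>w\<in>{w \<in> verts d p. w j = 0}. \<Sum>b<p j. \<Sum>a\<le>b. Q (w(j := a)) * Q (w(j := b)))"
    unfolding pausing_params_def by (simp add: sum.Sigma finite_verts)
  finally show ?thesis .
qed

lemma sum_triangle_square:
  fixes x :: "nat \<Rightarrow> 'a::comm_ring_1"
  shows "2 * (\<Sum>b<n. \<Sum>a\<le>b. x a * x b) = (\<Sum>a<n. x a)\<^sup>2 + (\<Sum>a<n. (x a)\<^sup>2)"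
proof (induction n)
  case (Suc n)
  have "(\<Sum>a\<le>n. x a * x n) = (\<Sum>a<n. x a) * x n + (x n)\<^sup>2"
    by (simp add: lessThan_Suc_atMost[symmetric] sum_distrib_right power2_eq_square)
  then show ?case using Suc by (simp add: algebra_simps power2_eq_square)
qed simp

lemma sum_cis_orthogonal:
  assumes "b < P" "b' < P"
  shows "(\<Sum>a<P. cis (- 2 * pi * real (a * b) / real P) * cnj (cis (- 2 * pi * real (a * b') / real P)))
    = (if b = b' then of_nat P else 0)"
proof -
  let ?\<zeta> = "\<lambda>k. cis (2 * pi * real k / real P)"
  define z where "z = ?\<zeta> b' / ?\<zeta> b"
  have P: "P > 0" using assms by simp
  have "cis (- 2 * pi * real (a * b) / real P) * cnj (cis (- 2 * pi * real (a * b') / real P)) = z ^ a"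
    for a
    unfolding z_def by (simp add: cis_cnj cis_divide cis_mult DeMoivre algebra_simps diff_divide_distrib)
  then have "(\<Sum>a<P. cis (- 2 * pi * real (a * b) / real P) * cnj (cis (- 2 * pi * real (a * b') / real P)))
      = (\<Sum>a<P. z ^ a)" by simp
  also have "\<dots> = (if b = b' then of_nat P else 0)"
  proof (cases "b = b'")
    case False
    have roots: "?\<zeta> k ^ P = 1" if "k < P" for k
      using bij_betw_roots_unity[OF P] that unfolding bij_betw_def by auto
    have "z \<noteq> 1"
      using False assms bij_betw_roots_unity[OF P] unfolding z_def bij_betw_def inj_on_def by auto
    moreover have "z ^ P = 1" using roots assms unfolding z_def by (simp add: power_divide)
    ultimately show ?thesis using False by (simp add: sum_gp_strict)
  qed (simp add: z_def)
  finally show ?thesis .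
qed

(* Pi\<^sub>E with 0 instead of undefined outside I, as in verts. *)
definition Pi_zero :: "nat set \<Rightarrow> (nat \<Rightarrow> nat set) \<Rightarrow> (nat \<Rightarrow> nat) set" where
  "Pi_zero I A = {n. (\<forall>i\<in>I. n i \<in> A i) \<and> (\<forall>i. i \<notin> I \<longrightarrow> n i = 0)}"

lemma sum_Pi_zero_prod:
  fixes g :: "nat \<Rightarrow> nat \<Rightarrow> 'a::comm_semiring_1"
  assumes "finite I" "\<And>i. i \<in> I \<Longrightarrow> finite (A i)"
  shows "(\<Sum>n\<in>Pi_zero I A. \<Prod>i\<in>I. g i (n i)) = (\<Prod>i\<in>I. \<Sum>a\<in>A i. g i a)"
proof -
  have "(\<Sum>n\<in>Pi_zero I A. \<Prod>i\<in>I. g i (n i)) = (\<Sum>f\<in>PiE I A. \<Prod>i\<in>I. g i (f i))"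
    by (rule sum.reindex_bij_witness[of _ "\<lambda>f i. if i \<in> I then f i else 0" "\<lambda>n. restrict n I"])
      (auto simp: Pi_zero_def PiE_def extensional_def intro!: prod.cong)
  also have "\<dots> = (\<Prod>i\<in>I. \<Sum>a\<in>A i. g i a)"
    using assms by (rule prod_sum_PiE[symmetric])
  finally show ?thesis .
qed

lemma verts_eq_Pi_zero: "verts d p = Pi_zero {..<d} (\<lambda>i. {..<p i})"
  unfolding verts_def Pi_zero_def by auto

lemma verts_coord_zero_eq_Pi_zero:
  "0 < p j \<Longrightarrow> {n \<in> verts d p. n j = 0} = Pi_zero ({..<d} - {j}) (\<lambda>i. {..<p i})"
  unfolding verts_def Pi_zero_def by auto

lemma sum_verts_split:
  assumes "j < d"
  shows "(\<Sum>v\<in>verts d p. f v) = (\<Sum>w\<in>{w \<in> verts d p. w j = 0}. \<Sum>a<p j. f (w(j := a)))"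
proof -
  have "(\<Sum>v\<in>verts d p. f v) = (\<Sum>(w, a)\<in>{w \<in> verts d p. w j = 0} \<times> {..<p j}. f (w(j := a)))"
    by (rule sum.reindex_bij_witness[of _ "\<lambda>(w, a). w(j := a)" "\<lambda>v. (v(j := 0), v j)"])
      (use assms in \<open>auto simp: verts_def\<close>)
  then show ?thesis by (simp add: sum.cartesian_product finite_verts)
qed

definition character :: "nat \<Rightarrow> (nat \<Rightarrow> nat) \<Rightarrow> (nat \<Rightarrow> nat) \<Rightarrow> (nat \<Rightarrow> nat) \<Rightarrow> complex" where
  "character d p n m = (\<Prod>i<d. cis (- 2 * pi * real (n i * m i) / real (p i)))"

lemma Qhat_eq_character_sum:
  "Qhat d p Q n = (\<Sum>m\<in>verts d p. character d p n m * of_real (Q m)) / of_nat (period_prod d p)"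
proof -
  have "exp (- 2 * pi * \<i> * (\<Sum>j<d. of_nat (n j * m j) / of_nat (p j))) = character d p n m" for m
  proof -
    have "- 2 * pi * \<i> * (\<Sum>j<d. of_nat (n j * m j) / of_nat (p j))
        = (\<Sum>j<d. \<i> * complex_of_real (- 2 * pi * real (n j * m j) / real (p j)))"
      by (simp add: sum_distrib_left algebra_simps)
    then show ?thesis by (simp add: character_def exp_sum cis_conv_exp)
  qed
  then show ?thesis by (simp add: Qhat_def)
qed

lemma sum_character_orthogonal:
  assumes "I \<subseteq> {..<d}" "m \<in> verts d p" "m' \<in> verts d p"
  shows "(\<Sum>n\<in>Pi_zero I (\<lambda>i. {..<p i}). character d p n m * cnj (character d p n m'))
    = (if \<forall>i\<in>I. m i = m' i then of_nat (\<Prod>i\<in>I. p i) else 0)"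
proof -
  define g where "g i a = cis (- 2 * pi * real (a * m i) / real (p i)) * cnj (cis (- 2 * pi * real (a * m' i) / real (p i)))"
    for i a
  have fin: "finite I" using assms(1) finite_subset by blast
  have "character d p n m * cnj (character d p n m') = (\<Prod>i\<in>I. g i (n i))"
    if "n \<in> Pi_zero I (\<lambda>i. {..<p i})" for n
  proof -
    have "character d p n m * cnj (character d p n m') = (\<Prod>i<d. g i (n i))"
      unfolding character_def g_def by (simp add: prod.distrib)
    also have "\<dots> = (\<Prod>i\<in>I. g i (n i))"
      using that assms(1) by (intro prod.mono_neutral_right) (auto simp: Pi_zero_def g_def)
    finally show ?thesis .
  qed
  then have "(\<Sum>n\<in>Pi_zero I (\<lambda>i. {..<p i}). character d p n m * cnj (character d p n m'))
      = (\<Sum>n\<in>Pi_zero I (\<lambda>i. {..<p i}). \<Prod>i\<in>I. g i (n i))"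
    by (rule sum.cong[OF refl])
  also have "\<dots> = (\<Prod>i\<in>I. \<Sum>a<p i. g i a)"
    by (rule sum_Pi_zero_prod[OF fin]) simp
  also have "\<dots> = (\<Prod>i\<in>I. if m i = m' i then of_nat (p i) else 0)"
  proof (intro prod.cong refl)
    fix i assume "i \<in> I"
    then have "m i < p i" "m' i < p i" using assms unfolding verts_def by auto
    then show "(\<Sum>a<p i. g i a) = (if m i = m' i then of_nat (p i) else 0)"
      unfolding g_def by (rule sum_cis_orthogonal)
  qed
  also have "\<dots> = (if \<forall>i\<in>I. m i = m' i then of_nat (\<Prod>i\<in>I. p i) else 0)"
    using fin by (auto simp: of_nat_prod)
  finally show ?thesis .
qed

lemma sum_Pi_zero_norm_Qhat_square:
  assumes "I \<subseteq> {..<d}"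
  shows "(\<Sum>n\<in>Pi_zero I (\<lambda>i. {..<p i}). (cmod (Qhat d p Q n))\<^sup>2)
    = real (\<Prod>i\<in>I. p i) / (real (period_prod d p))\<^sup>2 *
      (\<Sum>m\<in>verts d p. \<Sum>m'\<in>verts d p. if \<forall>i\<in>I. m i = m' i then Q m * Q m' else 0)"
proof -
  let ?S = "Pi_zero I (\<lambda>i. {..<p i})" and ?V = "verts d p"
  let ?c = "\<lambda>m m'. complex_of_real (Q m * Q m')" and ?pp = "of_nat (period_prod d p) :: complex"
  have "Qhat d p Q n * cnj (Qhat d p Q n) =
      (\<Sum>m\<in>?V. \<Sum>m'\<in>?V. ?c m m' * (character d p n m * cnj (character d p n m'))) / ?pp\<^sup>2" for n
    by (simp add: Qhat_eq_character_sum sum_product power2_eq_square algebra_simps)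
  then have "complex_of_real (\<Sum>n\<in>?S. (cmod (Qhat d p Q n))\<^sup>2)
      = (\<Sum>n\<in>?S. \<Sum>m\<in>?V. \<Sum>m'\<in>?V. ?c m m' * (character d p n m * cnj (character d p n m'))) / ?pp\<^sup>2"
    unfolding of_real_sum complex_norm_square by (simp add: sum_divide_distrib)
  also have "\<dots> = (\<Sum>m\<in>?V. \<Sum>m'\<in>?V. ?c m m' *
      (\<Sum>n\<in>?S. character d p n m * cnj (character d p n m'))) / ?pp\<^sup>2"
    by (simp add: sum.swap[of _ ?S] sum_distrib_left)
  also have "\<dots> = (\<Sum>m\<in>?V. \<Sum>m'\<in>?V. ?c m m' *
      (if \<forall>i\<in>I. m i = m' i then of_nat (\<Prod>i\<in>I. p i) else 0)) / ?pp\<^sup>2"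
    using sum_character_orthogonal[OF assms] by simp
  also have "\<dots> = of_nat (\<Prod>i\<in>I. p i) / ?pp\<^sup>2 *
      complex_of_real (\<Sum>m\<in>?V. \<Sum>m'\<in>?V. if \<forall>i\<in>I. m i = m' i then Q m * Q m' else 0)"
    unfolding of_real_sum sum_distrib_left sum_divide_distrib
    by (intro sum.cong refl) (simp add: of_nat_prod)
  also have "\<dots> = complex_of_real (real (\<Prod>i\<in>I. p i) / (real (period_prod d p))\<^sup>2 *
      (\<Sum>m\<in>?V. \<Sum>m'\<in>?V. if \<forall>i\<in>I. m i = m' i then Q m * Q m' else 0))"
    by simp
  finally show ?thesis using of_real_eq_iff by blast
qed

lemma period_prod_pos: "\<forall>i<d. 0 < p i \<Longrightarrow> 0 < period_prod d p"
  unfolding period_prod_def by (simp add: prod_pos)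

lemma sum_norm_Qhat_square:
  assumes "\<forall>i<d. 0 < p i"
  shows "(\<Sum>n\<in>verts d p. (cmod (Qhat d p Q n))\<^sup>2) = (\<Sum>v\<in>verts d p. (Q v)\<^sup>2) / real (period_prod d p)"
proof -
  have agree: "(\<forall>i\<in>{..<d}. m i = m' i) \<longleftrightarrow> m = m'" if "m \<in> verts d p" "m' \<in> verts d p" for m m'
  proof
    assume "\<forall>i\<in>{..<d}. m i = m' i"
    then show "m = m'" using that unfolding verts_def by (intro ext, case_tac "x < d") auto
  qed simp
  have "(\<Sum>m\<in>verts d p. \<Sum>m'\<in>verts d p. if \<forall>i\<in>{..<d}. m i = m' i then Q m * Q m' else 0)
      = (\<Sum>m\<in>verts d p. \<Sum>m'\<in>verts d p. if m = m' then Q m * Q m' else 0)"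
    by (intro sum.cong refl) (simp add: agree)
  also have "\<dots> = (\<Sum>m\<in>verts d p. (Q m)\<^sup>2)"
    by (intro sum.cong refl) (simp add: finite_verts power2_eq_square)
  finally have diag: "(\<Sum>m\<in>verts d p. \<Sum>m'\<in>verts d p. if \<forall>i\<in>{..<d}. m i = m' i then Q m * Q m' else 0)
      = (\<Sum>m\<in>verts d p. (Q m)\<^sup>2)" .
  have "real (period_prod d p) > 0" using period_prod_pos[OF assms] by simp
  then show ?thesis
    using sum_Pi_zero_norm_Qhat_square[of "{..<d}" d p Q]
    unfolding verts_eq_Pi_zero[symmetric] diag period_prod_def[symmetric]
    by (simp add: power2_eq_square)
qed

lemma sum_coord_zero_norm_Qhat_square:
  assumes j: "j < d" and pos: "\<forall>i<d. 0 < p i"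
  shows "(\<Sum>n\<in>{n \<in> verts d p. n j = 0}. (cmod (Qhat d p Q n))\<^sup>2)
    = (\<Sum>w\<in>{w \<in> verts d p. w j = 0}. (\<Sum>a<p j. Q (w(j := a)))\<^sup>2) / (real (period_prod d p) * real (p j))"
proof -
  let ?W = "{w \<in> verts d p. w j = 0}" and ?I = "{..<d} - {j}"
  have agree: "(\<forall>i\<in>?I. (w(j := a)) i = (w'(j := a')) i) \<longleftrightarrow> w = w'"
    if "w \<in> ?W" "w' \<in> ?W" for w w' a a'
  proof
    assume "\<forall>i\<in>?I. (w(j := a)) i = (w'(j := a')) i"
    then show "w = w'" using that unfolding verts_def by (intro ext, case_tac "x < d") auto
  qed simp
  have "(\<Sum>m\<in>verts d p. \<Sum>m'\<in>verts d p. if \<forall>i\<in>?I. m i = m' i then Q m * Q m' else 0)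
      = (\<Sum>w\<in>?W. \<Sum>a<p j. \<Sum>w'\<in>?W. \<Sum>a'<p j. if w = w' then Q (w(j := a)) * Q (w'(j := a')) else 0)"
    unfolding sum_verts_split[OF j] by (intro sum.cong refl if_cong agree) auto
  also have "\<dots> = (\<Sum>w\<in>?W. \<Sum>a<p j. \<Sum>a'<p j. Q (w(j := a)) * Q (w(j := a')))"
  proof (intro sum.cong refl)
    fix w a assume "w \<in> ?W"
    have "(\<Sum>w'\<in>?W. \<Sum>a'<p j. if w = w' then Q (w(j := a)) * Q (w'(j := a')) else 0)
        = (\<Sum>w'\<in>?W. if w = w' then \<Sum>a'<p j. Q (w(j := a)) * Q (w'(j := a')) else 0)"
      by (intro sum.cong) auto
    then show "(\<Sum>w'\<in>?W. \<Sum>a'<p j. if w = w' then Q (w(j := a)) * Q (w'(j := a')) else 0)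
        = (\<Sum>a'<p j. Q (w(j := a)) * Q (w(j := a')))"
      using \<open>w \<in> ?W\<close> by (simp add: finite_verts)
  qed
  also have "\<dots> = (\<Sum>w\<in>?W. (\<Sum>a<p j. Q (w(j := a)))\<^sup>2)"
    by (simp add: power2_eq_square sum_product)
  finally have fibres: "(\<Sum>m\<in>verts d p. \<Sum>m'\<in>verts d p. if \<forall>i\<in>?I. m i = m' i then Q m * Q m' else 0)
      = (\<Sum>w\<in>?W. (\<Sum>a<p j. Q (w(j := a)))\<^sup>2)" .
  have "period_prod d p = p j * (\<Prod>i\<in>?I. p i)"
    unfolding period_prod_def using j by (simp add: prod.remove)
  moreover have "0 < p j" "0 < (\<Prod>i\<in>?I. p i)" using pos j by (auto intro: prod_pos)
  ultimately show ?thesis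
    using sum_Pi_zero_norm_Qhat_square[of ?I d p Q]
    unfolding verts_coord_zero_eq_Pi_zero[of p j d, OF \<open>0 < p j\<close>, symmetric] fibres
    by (simp add: power2_eq_square)
qed

lemma I_idx_unitv_eq_fibre_squares:
  assumes j: "j < d" and P: "\<forall>i<d. p i \<ge> 2"
  shows "I_idx d p (p j + 2) (unitv j) Q =
    I_all d p 2 Q + (\<Sum>w\<in>{w \<in> verts d p. w j = 0}. (\<Sum>a<p j. Q (w(j := a)))\<^sup>2) / 2"
proof -
  let ?W = "{w \<in> verts d p. w j = 0}"
  have "I_idx d p (p j + 2) (unitv j) Q = (\<Sum>w\<in>?W. \<Sum>b<p j. \<Sum>a\<le>b. Q (w(j := a)) * Q (w(j := b)))"
    by (rule I_idx_unitv_eq[OF j])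
  also have "\<dots> = (\<Sum>w\<in>?W. ((\<Sum>a<p j. Q (w(j := a)))\<^sup>2 + (\<Sum>a<p j. (Q (w(j := a)))\<^sup>2)) / 2)"
    using sum_triangle_square[of "\<lambda>a. Q (_(j := a))"] by (intro sum.cong refl) (simp add: field_simps)
  also have "\<dots> = (\<Sum>v\<in>verts d p. (Q v)\<^sup>2) / 2 + (\<Sum>w\<in>?W. (\<Sum>a<p j. Q (w(j := a)))\<^sup>2) / 2"
    by (simp add: sum_verts_split[OF j] sum.distrib add_divide_distrib sum_divide_distrib)
  also have "(\<Sum>v\<in>verts d p. (Q v)\<^sup>2) / 2 = I_all d p 2 Q"
    using I_all_1_2[of 2 d p Q] P by simp
  finally show ?thesis .
qed

theorem corollary2p23:
  fixes d :: nat and p :: "nat \<Rightarrow> nat" and Q :: "(nat \<Rightarrow> nat) \<Rightarrow> real"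
  assumes "d \<ge> 1" and "\<forall>j<d. p j \<ge> 2"
  shows "(complex_of_real (I_all d p 1 Q) = of_nat (period_prod d p) * Qhat d p Q (\<lambda>_. 0)) \<and>
    (I_all d p 2 Q = real (period_prod d p) / 2 * (\<Sum>n\<in>verts d p. (cmod (Qhat d p Q n))\<^sup>2)) \<and>
    (\<forall>j<d. I_idx d p (p j + 2) (unitv j) Q =
           I_all d p 2 Q + real (period_prod d p) * real (p j) / 2 *
             (\<Sum>n\<in>{n \<in> verts d p. n j = 0}. (cmod (Qhat d p Q n))\<^sup>2))"
proof (intro conjI allI impI)
  have P: "\<forall>i<d. p i \<ge> 2" and pos: "\<forall>i<d. 0 < p i" using assms(2) by auto
  have pp: "0 < real (period_prod d p)" using period_prod_pos[OF pos] by simp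
  show "complex_of_real (I_all d p 1 Q) = of_nat (period_prod d p) * Qhat d p Q (\<lambda>_. 0)"
    using I_all_1_2[of 1 d p Q] P pp by (simp add: Qhat_eq_character_sum character_def of_real_sum)
  show "I_all d p 2 Q = real (period_prod d p) / 2 * (\<Sum>n\<in>verts d p. (cmod (Qhat d p Q n))\<^sup>2)"
    using I_all_1_2[of 2 d p Q] P pp by (simp add: sum_norm_Qhat_square[OF pos])
  fix j assume j: "j < d"
  have "0 < real (p j)" using pos j by simp
  then show "I_idx d p (p j + 2) (unitv j) Q =
      I_all d p 2 Q + real (period_prod d p) * real (p j) / 2 *
        (\<Sum>n\<in>{n \<in> verts d p. n j = 0}. (cmod (Qhat d p Q n))\<^sup>2)"
    unfolding I_idx_unitv_eq_fibre_squares[OF j P] sum_coord_zero_norm_Qhat_square[OF j pos]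
    using pp by simp
qed

end
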